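(* Let $P$ be a treetope with base $B$, and let $F$ be a nonempty face of $B$. Then there is exactly one face $F'$ of $P$ such that $F'\ne F$ and $F'\cap B=F$.
   Context: A polytope is the convex hull of a finite set of points in a Euclidean space; faces, vertices, edges, facets and the graph (1-skeleton) are as usual. A \emph{treetope} is a polytope $P$ together with a distinguished facet $B$ (the \emph{base}) such that every face $F$ of $P$ whose intersection $F\cap B$ consists of at most one point has dimension at most one. The face $F'$ in the statement is called the \emph{lift} of $F$. *)

theory Defs
  imports "HOL-Analysis.Analysis"
begin

definition treetope :: "'a::euclidean_space set \<Rightarrow> 'a set \<Rightarrow> bool" where
  "treetope P B \<longleftrightarrow> polytope P \<and> B facet_of P \<and>
     (\<forall>F. F face_of P \<longrightarrow> (\<forall>x\<in>F \<inter> B. \<forall>y\<in>F \<inter> B. x = y) \<longrightarrow> aff_dim F \<le> 1)"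

end

theory Submission
  imports Defs
begin

text \<open>
  Existence: in a polyhedron, if a linear functional is constant on a nonempty face F0 and
  exceeds that value somewhere, then some face of dimension one more than F0 contains F0 and
  a point beyond the level. For F and the base functional this face leaves the base
  hyperplane, and for dimension reasons it meets B exactly in F.

  Uniqueness rests on the fact that at a vertex v of B at most one edge of P meets B only in
  v. For two such edges, a combination of the base functional and a functional exposing v
  vanishes on the first edge, is negative on B - {v} and nonnegative on the second edge. It
  cannot be positive anywhere on P: the 2-face above the first edge would, by the treetope
  condition, meet B in a second point and then be forced across the hyperplane exposing the
  first edge. So its zero set is a face meeting B only in v, hence at most an edge, and it
  contains both edges. Finally, if G1 and G2 are lifts with G1 not contained in G2, then at
  a vertex v of F an edge of G1 leaving G1 \<inter> G2 and an edge of G2 leaving F both meet B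
  only in v; they coincide, which is absurd.
\<close>

section \<open>Finitely many linear constraints\<close>

lemma finite_strict_ineqs_perturb:
  fixes \<alpha> \<beta> \<gamma> :: "'i \<Rightarrow> real"
  assumes "finite H" "\<forall>h\<in>H. \<alpha> h < \<beta> h"
  shows "\<exists>t>0. \<forall>h\<in>H. \<alpha> h + t * \<gamma> h < \<beta> h"
proof -
  have "\<forall>\<^sub>F t in at_right 0. \<forall>h\<in>H. \<alpha> h + t * \<gamma> h < \<beta> h"
  proof (rule eventually_ball_finite[OF assms(1)], intro ballI)
    fix h assume "h \<in> H"
    have "((\<lambda>t. \<alpha> h + t * \<gamma> h) \<longlongrightarrow> \<alpha> h + 0 * \<gamma> h) (at_right 0)"
      by (intro tendsto_intros)
    then show "\<forall>\<^sub>F t in at_right 0. \<alpha> h + t * \<gamma> h < \<beta> h"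
      using assms(2) \<open>h \<in> H\<close> by (simp add: order_tendstoD(2))
  qed
  then obtain b where "b > 0" and b: "\<And>t. 0 < t \<Longrightarrow> t < b \<Longrightarrow> \<forall>h\<in>H. \<alpha> h + t * \<gamma> h < \<beta> h"
    by (auto simp: eventually_at_right_field)
  have "\<forall>h\<in>H. \<alpha> h + b / 2 * \<gamma> h < \<beta> h" by (rule b) (use \<open>b > 0\<close> in simp_all)
  moreover have "b / 2 > 0" using \<open>b > 0\<close> by simp
  ultimately show ?thesis by blast
qed

lemma exists_first_zero_crossing:
  fixes \<alpha> \<beta> :: "'i \<Rightarrow> real"
  assumes "finite T" "\<forall>i\<in>T. \<alpha> i \<le> 0" "j \<in> T" "\<beta> j > 0"
  shows "\<exists>s\<ge>0. (\<forall>i\<in>T. \<alpha> i + s * \<beta> i \<le> 0) \<and> (\<exists>k\<in>T. \<alpha> k + s * \<beta> k = 0)"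
proof -
  define R where "R = (\<lambda>i. - \<alpha> i / \<beta> i) ` {i \<in> T. \<beta> i > 0}"
  have "finite R" "R \<noteq> {}" using assms(1,3,4) by (auto simp: R_def)
  then have "Min R \<in> R" by (rule Min_in)
  then obtain k where k: "k \<in> T" "\<beta> k > 0" "Min R = - \<alpha> k / \<beta> k"
    by (auto simp: R_def)
  have le: "Min R \<le> - \<alpha> i / \<beta> i" if "i \<in> T" "\<beta> i > 0" for i
    using \<open>finite R\<close> that by (intro Min_le) (auto simp: R_def)
  have nonneg: "Min R \<ge> 0" using k assms(2) by (simp add: divide_nonpos_pos)
  have "\<alpha> i + Min R * \<beta> i \<le> 0" if i: "i \<in> T" for i
  proof (cases "\<beta> i > 0")
    case True
    then show ?thesis using le[OF i True] unfolding pos_le_divide_eq[OF True] by linarith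
  next
    case False
    then have "Min R * \<beta> i \<le> 0" using nonneg by (simp add: mult_nonneg_nonpos)
    then show ?thesis using assms(2) i by fastforce
  qed
  moreover have "\<alpha> k + Min R * \<beta> k = 0" using k by simp
  ultimately show ?thesis using nonneg k(1) by blast
qed

lemma exists_orthogonal_outside_span:
  fixes g d :: "'a::euclidean_space"
  assumes "d \<in> span S" "g \<bullet> d \<noteq> 0" "dim T + 1 < dim S"
  obtains e where "e \<in> span S" "g \<bullet> e = 0" "e \<notin> span T"
proof -
  have "S \<subseteq> span (insert d T)" if kernel: "\<And>e. e \<in> span S \<Longrightarrow> g \<bullet> e = 0 \<Longrightarrow> e \<in> span T"
  proof
    fix v assume "v \<in> S"
    define w where "w = v - ((g \<bullet> v) / (g \<bullet> d)) *\<^sub>R d"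
    have "w \<in> span S" using \<open>v \<in> S\<close> assms(1) by (simp add: w_def span_base span_diff span_scale)
    moreover have "g \<bullet> w = 0" using assms(2) by (simp add: w_def inner_diff_right)
    ultimately have "w \<in> span (insert d T)" using kernel span_mono[of T "insert d T"] by blast
    then have "w + ((g \<bullet> v) / (g \<bullet> d)) *\<^sub>R d \<in> span (insert d T)"
      by (simp add: span_add span_scale span_base)
    then show "v \<in> span (insert d T)" by (simp add: w_def)
  qed
  moreover have "dim (insert d T) \<le> dim T + 1" by (simp add: dim_insert)
  ultimately show ?thesis using that assms(3) dim_mono[of S "insert d T"] by fastforce
qed

section \<open>Faces of a polyhedron one dimension up\<close>

lemma polyhedron_facet_constraints:
  fixes S :: "'a::euclidean_space set"
  assumes "polyhedron S"
  obtains I :: "'a set set" and a b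
  where "finite I" "S = affine hull S \<inter> {x. \<forall>i\<in>I. a i \<bullet> x \<le> b i}"
    "\<And>K. K facet_of S \<longleftrightarrow> (\<exists>i\<in>I. K = S \<inter> {x. a i \<bullet> x = b i})"
proof -
  obtain \<F> where fin: "finite \<F>" and seq: "S = affine hull S \<inter> \<Inter>\<F>"
     and faces: "\<And>h. h \<in> \<F> \<Longrightarrow> \<exists>a b. a \<noteq> 0 \<and> h = {x. a \<bullet> x \<le> b}"
     and min: "\<And>F'. F' \<subset> \<F> \<Longrightarrow> S \<subset> affine hull S \<inter> \<Inter>F'"
    using assms by (simp add: polyhedron_Int_affine_minimal) meson
  then obtain a b where ab: "\<And>h. h \<in> \<F> \<Longrightarrow> a h \<noteq> 0 \<and> h = {x. a h \<bullet> x \<le> b h}"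
    by metis
  have "\<Inter>\<F> = {x. \<forall>h\<in>\<F>. a h \<bullet> x \<le> b h}" using ab by blast
  then have "S = affine hull S \<inter> {x. \<forall>h\<in>\<F>. a h \<bullet> x \<le> b h}" using seq by argo
  then show ?thesis
  proof (rule that[OF fin])
    fix K
    show "K facet_of S \<longleftrightarrow> (\<exists>h\<in>\<F>. K = S \<inter> {x. a h \<bullet> x = b h})"
      using facet_of_polyhedron_explicit[OF fin seq ab min, of K] by blast
  qed
qed

lemma rel_interior_point_on_supporting_hyperplane:
  fixes S :: "'a::euclidean_space set"
  assumes "F face_of S" "p \<in> rel_interior F" "S \<subseteq> {x. a \<bullet> x \<le> b}"
  shows "a \<bullet> p = b \<longleftrightarrow> F \<subseteq> {x. a \<bullet> x = b}"
proof
  assume "a \<bullet> p = b"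
  have "convex F" using assms(1) face_of_imp_convex by blast
  moreover have "F \<subseteq> {x. a \<bullet> x \<le> b}" using assms(1,3) face_of_imp_subset by blast
  ultimately have face: "(F \<inter> {x. a \<bullet> x = b}) face_of F"
    by (intro face_of_Int_supporting_hyperplane_le) auto
  have "p \<in> (F \<inter> {x. a \<bullet> x = b}) \<inter> rel_interior F"
    using assms(2) \<open>a \<bullet> p = b\<close> rel_interior_subset by blast
  then have "F \<inter> {x. a \<bullet> x = b} = F" using face_of_disjoint_rel_interior[OF face] by blast
  then show "F \<subseteq> {x. a \<bullet> x = b}" by blast
qed (use assms(2) rel_interior_subset in blast)

lemma polyhedron_feasible_direction:
  fixes S :: "'a::euclidean_space set"
  assumes "finite I" "S = affine hull S \<inter> {x. \<forall>i\<in>I. a i \<bullet> x \<le> b i}"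
    and "p \<in> S" "v \<in> span ((+) (- p) ` S)"
    and "\<And>i. i \<in> I \<Longrightarrow> a i \<bullet> p = b i \<Longrightarrow> a i \<bullet> v \<le> 0"
  obtains t where "t > 0" "p + t *\<^sub>R v \<in> S"
proof -
  have S_le: "S \<subseteq> {x. \<forall>i\<in>I. a i \<bullet> x \<le> b i}" by (subst assms(2)) blast
  have "a i \<bullet> p \<le> b i" if "i \<in> I" for i using S_le assms(3) that by blast
  then have "\<forall>i\<in>{i \<in> I. a i \<bullet> p \<noteq> b i}. a i \<bullet> p < b i" by force
  then have "\<exists>t>0. \<forall>i\<in>{i \<in> I. a i \<bullet> p \<noteq> b i}. a i \<bullet> p + t * (a i \<bullet> v) < b i"
    using assms(1) by (intro finite_strict_ineqs_perturb) simp_all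
  then obtain t where "t > 0"
      and slack: "\<And>i. i \<in> I \<Longrightarrow> a i \<bullet> p \<noteq> b i \<Longrightarrow> a i \<bullet> p + t * (a i \<bullet> v) < b i" by blast
  have "a i \<bullet> (p + t *\<^sub>R v) \<le> b i" if "i \<in> I" for i
  proof (cases "a i \<bullet> p = b i")
    case True
    then show ?thesis
      using assms(5)[OF that True] \<open>t > 0\<close> by (simp add: inner_add_right mult_nonneg_nonpos)
  next
    case False
    then show ?thesis using slack that by (fastforce simp: inner_add_right inner_diff_right)
  qed
  moreover have "p + t *\<^sub>R v \<in> affine hull S"
    using affine_hull_span_gen[OF hull_inc[OF assms(3)]] assms(4) by (auto simp: span_scale)
  ultimately have "p + t *\<^sub>R v \<in> S" by (subst assms(2)) blast
  then show ?thesis using that \<open>t > 0\<close> by blast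
qed

lemma polyhedron_tight_constraint_along_direction:
  fixes S :: "'a::euclidean_space set"
  assumes poly: "polyhedron S" and fin: "finite I"
    and S_eq: "S = affine hull S \<inter> {x. \<forall>i\<in>I. a i \<bullet> x \<le> b i}"
    and facet: "\<And>K. K facet_of S \<longleftrightarrow> (\<exists>i\<in>I. K = S \<inter> {x. a i \<bullet> x = b i})"
    and F0: "F0 face_of S" "F0 \<noteq> {}" "F0 \<noteq> S" and p: "p \<in> rel_interior F0"
    and e: "e \<in> span ((+) (- p) ` S)" "e \<notin> span ((+) (- p) ` F0)"
  shows "\<exists>i\<in>I. a i \<bullet> p = b i \<and> a i \<bullet> e \<noteq> 0"
proof (rule ccontr)
  assume "\<not> ?thesis"
  then have flat: "\<And>i. i \<in> I \<Longrightarrow> a i \<bullet> p = b i \<Longrightarrow> a i \<bullet> e = 0" by blast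
  have pS: "p \<in> S" using p rel_interior_subset F0(1) face_of_imp_subset by blast
  from flat have "\<And>i. i \<in> I \<Longrightarrow> a i \<bullet> p = b i \<Longrightarrow> a i \<bullet> e \<le> 0" by simp
  then obtain t where "t > 0" "p + t *\<^sub>R e \<in> S"
    by (rule polyhedron_feasible_direction[OF fin S_eq pS e(1)])
  \<comment> \<open>Moving along e keeps every constraint that is tight on F0 tight, hence stays in F0.\<close>
  have "p + t *\<^sub>R e \<in> K" if K: "K facet_of S" "F0 \<subseteq> K" for K
  proof -
    obtain i where i: "i \<in> I" "K = S \<inter> {x. a i \<bullet> x = b i}"
      using facet[THEN iffD1, OF K(1)] by blast
    have "S \<subseteq> {x. a i \<bullet> x \<le> b i}" using i(1) by (subst S_eq) blast
    moreover have "F0 \<subseteq> {x. a i \<bullet> x = b i}" using K(2) i(2) by blast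
    ultimately have "a i \<bullet> p = b i"
      using rel_interior_point_on_supporting_hyperplane[OF F0(1) p] by blast
    then show ?thesis using i flat \<open>p + t *\<^sub>R e \<in> S\<close> by (simp add: inner_add_right)
  qed
  then have "p + t *\<^sub>R e \<in> F0" by (subst face_of_polyhedron[OF poly F0]) blast
  then have "t *\<^sub>R e \<in> span ((+) (- p) ` F0)"
    by (intro span_base image_eqI[of _ _ "p + t *\<^sub>R e"]) auto
  then have "(1 / t) *\<^sub>R (t *\<^sub>R e) \<in> span ((+) (- p) ` F0)" by (rule span_scale)
  then show False using e(2) \<open>t > 0\<close> by simp
qed

lemma polyhedron_facet_above_level:
  fixes S :: "'a::euclidean_space set"
  assumes poly: "polyhedron S" and F0: "F0 face_of S" "F0 \<noteq> {}"
    and codim: "aff_dim F0 + 1 < aff_dim S"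
    and level: "\<And>x. x \<in> F0 \<Longrightarrow> g \<bullet> x = c" and y: "y \<in> S" "g \<bullet> y > c"
  shows "\<exists>K. K facet_of S \<and> F0 \<subseteq> K \<and> (\<exists>z\<in>K. g \<bullet> z > c)"
proof -
  obtain I :: "'a set set" and a b where fin: "finite I"
      and S_eq: "S = affine hull S \<inter> {x. \<forall>i\<in>I. a i \<bullet> x \<le> b i}"
      and facet: "\<And>K. K facet_of S \<longleftrightarrow> (\<exists>i\<in>I. K = S \<inter> {x. a i \<bullet> x = b i})"
    using polyhedron_facet_constraints[OF poly] by blast
  have S_le: "S \<subseteq> {x. a i \<bullet> x \<le> b i}" if "i \<in> I" for i using that by (subst S_eq) blast
  have "F0 \<noteq> S" using codim by auto
  obtain p where p: "p \<in> rel_interior F0"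
    using F0 face_of_imp_convex rel_interior_eq_empty by blast
  have pF0: "p \<in> F0" using p rel_interior_subset by blast
  have pS: "p \<in> S" using pF0 F0(1) face_of_imp_subset by blast
  have tight_iff: "a i \<bullet> p = b i \<longleftrightarrow> F0 \<subseteq> {x. a i \<bullet> x = b i}" if "i \<in> I" for i
    using rel_interior_point_on_supporting_hyperplane[OF F0(1) p S_le[OF that]] .
  define D where "D = (+) (- p) ` S"
  define W where "W = (+) (- p) ` F0"
  have yD: "- p + y \<in> span D" using y(1) by (auto simp: D_def intro: span_base)
  have gy: "g \<bullet> (- p + y) > 0"
    using y(2) level[OF pF0] by (simp add: inner_add_right inner_diff_right)
  have y_tight: "a i \<bullet> (- p + y) \<le> 0" if "i \<in> I" "a i \<bullet> p = b i" for i
  proof -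
    have "a i \<bullet> y \<le> b i" using S_le[OF that(1)] y(1) by blast
    then show ?thesis using that(2) by (simp add: inner_diff_right)
  qed
  have "dim W + 1 < dim D"
    using codim aff_dim_eq_dim[OF hull_inc[OF pS]] aff_dim_eq_dim[OF hull_inc[OF pF0]]
    by (simp add: D_def W_def)
  moreover have "g \<bullet> (- p + y) \<noteq> 0" using gy by linarith
  ultimately obtain e0 where e0: "e0 \<in> span D" "g \<bullet> e0 = 0" "e0 \<notin> span W"
    using exists_orthogonal_outside_span[OF yD] by blast
  have "\<exists>i\<in>I. a i \<bullet> p = b i \<and> a i \<bullet> e0 \<noteq> 0"
    using polyhedron_tight_constraint_along_direction[OF poly fin S_eq facet F0 \<open>F0 \<noteq> S\<close> p] e0(1,3)
    by (simp add: D_def W_def)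
  then obtain j where j: "j \<in> I" "a j \<bullet> p = b j" "a j \<bullet> e0 \<noteq> 0" by blast
  define e where "e = (if a j \<bullet> e0 > 0 then e0 else - e0)"
  have e: "e \<in> span D" "g \<bullet> e = 0" "a j \<bullet> e > 0"
    using e0(1,2) j(3) by (auto simp: e_def span_neg)
  \<comment> \<open>Tilt y - p along e, which does not change g, until it runs into a facet through F0.\<close>
  let ?T = "{i \<in> I. a i \<bullet> p = b i}"
  obtain s k where s: "\<forall>i\<in>?T. a i \<bullet> (- p + y) + s * (a i \<bullet> e) \<le> 0"
      and k: "k \<in> ?T" "a k \<bullet> (- p + y) + s * (a k \<bullet> e) = 0"
    using exists_first_zero_crossing[of ?T "\<lambda>i. a i \<bullet> (- p + y)" j "\<lambda>i. a i \<bullet> e"]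
      fin j(1,2) e(3) y_tight by auto
  define d where "d = (- p + y) + s *\<^sub>R e"
  have "d \<in> span D" using yD e(1) by (simp add: d_def span_add span_scale)
  moreover have "a i \<bullet> d \<le> 0" if "i \<in> I" "a i \<bullet> p = b i" for i
    using s that by (simp add: d_def inner_add_right inner_diff_right)
  ultimately obtain t where "t > 0" and z: "p + t *\<^sub>R d \<in> S"
    unfolding D_def by (rule polyhedron_feasible_direction[OF fin S_eq pS])
  define K where "K = S \<inter> {x. a k \<bullet> x = b k}"
  have "K facet_of S" using facet k(1) by (auto simp: K_def)
  moreover have "F0 \<subseteq> K" using tight_iff k(1) face_of_imp_subset[OF F0(1)] by (auto simp: K_def)
  moreover have "p + t *\<^sub>R d \<in> K"
    using z k by (simp add: K_def d_def inner_add_right inner_diff_right)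
  moreover have "g \<bullet> (p + t *\<^sub>R d) > c"
    using level[OF pF0] gy e(2) \<open>t > 0\<close> by (simp add: d_def inner_add_right inner_diff_right)
  ultimately show ?thesis by blast
qed

lemma polyhedron_cover_above_level:
  fixes Q :: "'a::euclidean_space set"
  assumes "polyhedron Q" "F0 face_of Q" "F0 \<noteq> {}" "\<And>x. x \<in> F0 \<Longrightarrow> g \<bullet> x = c"
    and "y \<in> Q" "g \<bullet> y > c"
  shows "\<exists>E. E face_of Q \<and> F0 \<subseteq> E \<and> aff_dim E = aff_dim F0 + 1 \<and> (\<exists>z\<in>E. g \<bullet> z > c)"
  using assms
proof (induction "nat (aff_dim Q - aff_dim F0)" arbitrary: Q y rule: less_induct)
  case less
  have "convex Q" using less.prems(1) polyhedron_imp_convex by blast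
  have "F0 \<noteq> Q" using less.prems(4-6) by fastforce
  then have "aff_dim F0 < aff_dim Q" using face_of_aff_dim_lt[OF \<open>convex Q\<close> less.prems(2)] by blast
  show ?case
  proof (cases "aff_dim Q = aff_dim F0 + 1")
    case True
    moreover have "F0 \<subseteq> Q" using less.prems(2) face_of_imp_subset by blast
    ultimately show ?thesis using face_of_refl[OF \<open>convex Q\<close>] less.prems(5,6) by blast
  next
    case False
    then have "aff_dim F0 + 1 < aff_dim Q" using \<open>aff_dim F0 < aff_dim Q\<close> by linarith
    then obtain K z where K: "K facet_of Q" "F0 \<subseteq> K" "z \<in> K" "g \<bullet> z > c"
      using polyhedron_facet_above_level[OF less.prems(1-3) _ less.prems(4-6)] by blast
    have "K face_of Q" using K(1) facet_of_imp_face_of by blast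
    have "polyhedron K" using face_of_polyhedron_polyhedron[OF less.prems(1) \<open>K face_of Q\<close>] .
    have "F0 face_of K"
      using face_of_subset[OF less.prems(2) K(2) face_of_imp_subset[OF \<open>K face_of Q\<close>]] .
    have "aff_dim K = aff_dim Q - 1" using K(1) by (simp add: facet_of_def)
    then have "nat (aff_dim K - aff_dim F0) < nat (aff_dim Q - aff_dim F0)"
      using \<open>aff_dim F0 + 1 < aff_dim Q\<close> by linarith
    then obtain E where E: "E face_of K" "F0 \<subseteq> E" "aff_dim E = aff_dim F0 + 1" "\<exists>z\<in>E. g \<bullet> z > c"
      using less.hyps[OF _ \<open>polyhedron K\<close> \<open>F0 face_of K\<close> less.prems(3,4) K(3,4)] by blast
    have "E face_of Q" using face_of_trans[OF E(1) \<open>K face_of Q\<close>] .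
    then show ?thesis using E(2-4) by blast
  qed
qed

lemma polyhedron_face_exposed:
  fixes P :: "'a::euclidean_space set"
  assumes "polyhedron P" "G face_of P"
  obtains \<psi> k where "P \<subseteq> {x. \<psi> \<bullet> x \<le> k}" "G = P \<inter> {x. \<psi> \<bullet> x = k}"
proof -
  have "G exposed_face_of P" using assms by (simp add: exposed_face_of_polyhedron)
  then show ?thesis unfolding exposed_face_of_def by (elim conjE exE) (rule that)
qed

lemma polyhedron_edge_leaving_face:
  fixes Q C :: "'a::euclidean_space set"
  assumes poly: "polyhedron Q" and "{v} face_of Q" "C face_of Q" "v \<in> C" "C \<noteq> Q"
  obtains E where "E face_of Q" "v \<in> E" "aff_dim E = 1" "\<not> E \<subseteq> C"
proof -
  obtain \<psi> k where \<psi>: "Q \<subseteq> {x. \<psi> \<bullet> x \<le> k}" "C = Q \<inter> {x. \<psi> \<bullet> x = k}"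
    using polyhedron_face_exposed[OF poly assms(3)] .
  obtain y where "y \<in> Q" "y \<notin> C" using assms(3,5) face_of_imp_subset by blast
  then have "(- \<psi>) \<bullet> y > - k" using \<psi> by fastforce
  moreover have "(- \<psi>) \<bullet> x = - k" if "x \<in> {v}" for x using that assms(4) \<psi>(2) by auto
  ultimately obtain E z where "E face_of Q" "{v} \<subseteq> E" "aff_dim E = aff_dim {v} + 1"
      and z: "z \<in> E" "(- \<psi>) \<bullet> z > - k"
    using polyhedron_cover_above_level[OF poly assms(2) _ _ \<open>y \<in> Q\<close>] by blast
  moreover have "z \<notin> C" using z(2) \<psi>(2) by auto
  ultimately show ?thesis using that z(1) by auto
qed

lemma aff_dim_ge_1_of_two_points:
  fixes G :: "'a::euclidean_space set"
  assumes "v \<in> G" "u \<in> G" "u \<noteq> v"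
  shows "1 \<le> aff_dim G"
  using aff_dim_subset[of "{v, u}" G] assms by simp

lemma aff_dim_le_1_subset_affine_hull:
  fixes G :: "'a::euclidean_space set"
  assumes "aff_dim G \<le> 1" "v \<in> G" "u \<in> G" "u \<noteq> v"
  shows "G \<subseteq> affine hull {v, u}"
proof
  fix x assume "x \<in> G"
  have "collinear G" using assms(1) by (simp add: collinear_aff_dim)
  then have "collinear {v, u, x}" using assms(2,3) \<open>x \<in> G\<close> by (auto intro: collinear_subset)
  then show "x \<in> affine hull {v, u}" using collinear_3_affine_hull assms(4) by metis
qed

lemma faces_eq_of_aff_dim_le_1:
  fixes P :: "'a::euclidean_space set"
  assumes "G1 face_of P" "G2 face_of P" "aff_dim G1 \<le> 1" "aff_dim G2 \<le> 1"
    and "v \<in> G1 \<inter> G2" "u \<in> G1 \<inter> G2" "u \<noteq> v"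
  shows "G1 = G2"
proof -
  have "G1 \<inter> G2 = G" if "G \<in> {G1, G2}" for G
  proof (rule ccontr)
    assume "G1 \<inter> G2 \<noteq> G"
    have G: "G face_of P" "aff_dim G \<le> 1" using that assms(1-4) by auto
    moreover have "(G1 \<inter> G2) face_of G"
      using face_of_subset[OF face_of_Int[OF assms(1,2)]] that face_of_imp_subset[OF G(1)] by blast
    ultimately have "aff_dim (G1 \<inter> G2) < 1"
      using face_of_aff_dim_lt[OF face_of_imp_convex[OF G(1)] _ \<open>G1 \<inter> G2 \<noteq> G\<close>] by fastforce
    then show False using aff_dim_ge_1_of_two_points[OF assms(5-7)] by linarith
  qed
  then show ?thesis by blast
qed

lemma face_Int_face_eq_of_aff_dim:
  fixes P :: "'a::euclidean_space set"
  assumes "E face_of P" "B face_of P" "F face_of P" "F \<subseteq> E" "F \<subseteq> B"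
    and "\<not> E \<subseteq> B" "aff_dim E = aff_dim F + 1"
  shows "E \<inter> B = F"
proof (rule ccontr)
  assume "E \<inter> B \<noteq> F"
  have EB: "(E \<inter> B) face_of P" using face_of_Int[OF assms(1,2)] .
  have "(E \<inter> B) face_of E" using face_of_subset[OF EB _ face_of_imp_subset[OF assms(1)]] by blast
  then have "aff_dim (E \<inter> B) < aff_dim E"
    using face_of_aff_dim_lt[OF face_of_imp_convex[OF assms(1)]] assms(6) by blast
  moreover have "F face_of (E \<inter> B)"
    using face_of_subset[OF assms(3) _ face_of_imp_subset[OF EB]] assms(4,5) by blast
  then have "aff_dim F < aff_dim (E \<inter> B)"
    using face_of_aff_dim_lt[OF face_of_imp_convex[OF EB]] \<open>E \<inter> B \<noteq> F\<close> by blast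
  ultimately show False using assms(7) by linarith
qed

lemma inner_affine_combination3:
  fixes \<psi> v u w :: "'a::real_inner"
  assumes "p + q + r = 1"
  shows "\<psi> \<bullet> (p *\<^sub>R v + q *\<^sub>R u + r *\<^sub>R w) - k
           = p * (\<psi> \<bullet> v - k) + q * (\<psi> \<bullet> u - k) + r * (\<psi> \<bullet> w - k)"
proof -
  have "k = (p + q + r) * k" using assms by simp
  then show ?thesis by (simp add: inner_add_right algebra_simps)
qed

lemma polyhedron_face_affine_combination_coeff_nonneg:
  fixes P G :: "'a::euclidean_space set"
  assumes "polyhedron P" "G face_of P" "v \<in> G" "u \<in> G" "w \<in> P - G" "z \<in> P"
    and z: "z = p *\<^sub>R v + q *\<^sub>R u + r *\<^sub>R w" "p + q + r = 1"
  shows "r \<ge> 0"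
proof (rule ccontr)
  assume "\<not> r \<ge> 0"
  obtain \<psi> l where \<psi>: "P \<subseteq> {x. \<psi> \<bullet> x \<le> l}" "G = P \<inter> {x. \<psi> \<bullet> x = l}"
    using polyhedron_face_exposed[OF assms(1,2)] .
  have "\<psi> \<bullet> w \<noteq> l" "\<psi> \<bullet> w \<le> l" using \<psi> assms(5) by blast+
  then have "0 < r * (\<psi> \<bullet> w - l)" using \<open>\<not> r \<ge> 0\<close> by (simp add: mult_neg_neg)
  moreover have "\<psi> \<bullet> v = l" "\<psi> \<bullet> u = l" using \<psi>(2) assms(3,4) by blast+
  then have "\<psi> \<bullet> z - l = r * (\<psi> \<bullet> w - l)"
    using inner_affine_combination3[OF z(2), of \<psi> v u w l] z(1) by simp
  moreover have "\<psi> \<bullet> z \<le> l" using \<psi>(1) assms(6) by blast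
  ultimately show False by linarith
qed

section \<open>Edges and lifts in a treetope\<close>

lemma treetope_face_aff_dim_le_1:
  assumes "treetope P B" "G face_of P" "G \<inter> B \<subseteq> {v}"
  shows "aff_dim G \<le> 1"
  using assms unfolding treetope_def by blast

lemma treetope_edge_level_le:
  fixes P B G :: "'a::euclidean_space set"
  assumes tt: "treetope P B" and G: "G face_of P" "G \<inter> B = {v}" "u \<in> G" "u \<noteq> v"
    and on_G: "\<And>x. x \<in> G \<Longrightarrow> \<gamma> \<bullet> x = k"
    and below_on_B: "\<And>x. x \<in> B \<Longrightarrow> x \<noteq> v \<Longrightarrow> \<gamma> \<bullet> x < k"
  shows "P \<subseteq> {x. \<gamma> \<bullet> x \<le> k}"
proof (rule ccontr)
  assume "\<not> ?thesis"
  then obtain y where y: "y \<in> P" "\<not> \<gamma> \<bullet> y \<le> k" by blast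
  then have "\<gamma> \<bullet> y > k" by linarith
  have poly: "polyhedron P" using tt polytope_imp_polyhedron by (auto simp: treetope_def)
  have vG: "v \<in> G" using G(2) by blast
  have "aff_dim G = 1"
    using treetope_face_aff_dim_le_1[OF tt G(1)] G(2) aff_dim_ge_1_of_two_points[OF vG G(3,4)]
    by force
  then obtain E z where E: "E face_of P" "G \<subseteq> E" "aff_dim E = 2" and z: "z \<in> E" "\<gamma> \<bullet> z > k"
    using polyhedron_cover_above_level[OF poly G(1) _ on_G y(1) \<open>\<gamma> \<bullet> y > k\<close>] vG by auto
  have EP: "E \<subseteq> P" using E(1) face_of_imp_subset by blast
  have "\<not> E \<inter> B \<subseteq> {v}" using treetope_face_aff_dim_le_1[OF tt E(1), of v] E(3) by auto
  then obtain w where w: "w \<in> E" "w \<in> B" "w \<noteq> v" by blast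
  have "\<gamma> \<bullet> w < k" using below_on_B w(2,3) .
  have "affine hull {v, u} \<subseteq> {x. \<gamma> \<bullet> x = k}"
    using on_G vG G(3) by (intro hull_minimal) (auto simp: affine_hyperplane)
  then have "w \<notin> affine hull {v, u}" using \<open>\<gamma> \<bullet> w < k\<close> by force
  then have "aff_dim {w, v, u} = 2" using aff_dim_insert[of w "{v, u}"] G(4) by simp
  moreover have "affine hull {w, v, u} \<subseteq> affine hull E"
    using w(1) vG G(3) E(2) by (intro hull_mono) auto
  ultimately have "affine hull {w, v, u} = affine hull E"
    by (intro affine_dim_equal) (auto simp: E(3))
  then have "z \<in> affine hull {v, u, w}"
    using z(1) hull_subset[of E affine] by (auto simp: insert_commute)
  then obtain p q r where z_eq: "z = p *\<^sub>R v + q *\<^sub>R u + r *\<^sub>R w" "p + q + r = 1"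
    by (auto simp: affine_hull_3)
  have "\<gamma> \<bullet> z - k = r * (\<gamma> \<bullet> w - k)"
    using inner_affine_combination3[OF z_eq(2), of \<gamma> v u w k] on_G[OF vG] on_G[OF G(3)] z_eq(1)
    by simp
  then have "0 < r * (\<gamma> \<bullet> w - k)" using z(2) by linarith
  then have "r < 0" using \<open>\<gamma> \<bullet> w < k\<close> by (simp add: zero_less_mult_iff)
  moreover have "w \<in> P - G" "z \<in> P" using w z(1) EP G(2) by blast+
  ultimately show False
    using polyhedron_face_affine_combination_coeff_nonneg[OF poly G(1) vG G(3) _ _ z_eq] by force
qed

lemma treetope_edges_eq_of_level:
  fixes P B :: "'a::euclidean_space set"
  assumes tt: "treetope P B"
    and G1: "G1 face_of P" "G1 \<inter> B = {v}" "u1 \<in> G1" "u1 \<noteq> v"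
    and G2: "G2 face_of P" "G2 \<inter> B = {v}" "u2 \<in> G2" "u2 \<noteq> v"
    and on_G1: "\<forall>x\<in>G1. \<gamma> \<bullet> x = k"
    and below_on_B: "\<And>x. x \<in> B \<Longrightarrow> x \<noteq> v \<Longrightarrow> \<gamma> \<bullet> x < k"
    and "\<gamma> \<bullet> u2 \<ge> k"
  shows "G1 = G2"
proof -
  have below: "P \<subseteq> {x. \<gamma> \<bullet> x \<le> k}"
    by (rule treetope_edge_level_le[OF tt G1]) (use on_G1 below_on_B in auto)
  define M where "M = P \<inter> {x. \<gamma> \<bullet> x = k}"
  have "convex P" using tt polytope_imp_convex by (auto simp: treetope_def)
  then have M: "M face_of P"
    unfolding M_def using face_of_Int_supporting_hyperplane_le below by blast
  have "M \<inter> B \<subseteq> {v}" using below_on_B by (force simp: M_def)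
  then have "aff_dim M \<le> 1" using treetope_face_aff_dim_le_1[OF tt M] by blast
  have "aff_dim G1 \<le> 1" "aff_dim G2 \<le> 1"
    using treetope_face_aff_dim_le_1[OF tt G1(1), of v]
      treetope_face_aff_dim_le_1[OF tt G2(1), of v] G1(2) G2(2) by simp_all
  have vG1: "v \<in> G1" and vG2: "v \<in> G2" using G1(2) G2(2) by blast+
  have G1P: "G1 \<subseteq> P" and G2P: "G2 \<subseteq> P" using G1(1) G2(1) face_of_imp_subset by blast+
  have "G1 \<subseteq> M" using on_G1 G1P by (auto simp: M_def)
  then have "G1 = M"
    using faces_eq_of_aff_dim_le_1[OF G1(1) M \<open>aff_dim G1 \<le> 1\<close> \<open>aff_dim M \<le> 1\<close>] vG1 G1(3,4) by blast
  moreover have "u2 \<in> M" using below \<open>\<gamma> \<bullet> u2 \<ge> k\<close> G2(3) G2P by (force simp: M_def)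
  ultimately show ?thesis
    using faces_eq_of_aff_dim_le_1[OF G1(1) G2(1) \<open>aff_dim G1 \<le> 1\<close> \<open>aff_dim G2 \<le> 1\<close>] vG1 vG2 G2(3,4)
    by blast
qed

lemma treetope_edges_at_vertex_eq_of_ratio_le:
  fixes P B :: "'a::euclidean_space set"
  assumes tt: "treetope P B"
    and base: "P \<subseteq> {x. a \<bullet> x \<le> b}" "B = P \<inter> {x. a \<bullet> x = b}"
    and vertex: "P \<subseteq> {x. c \<bullet> x \<le> d}" "{v} = P \<inter> {x. c \<bullet> x = d}"
    and G1: "G1 face_of P" "G1 \<inter> B = {v}" "u1 \<in> G1" "u1 \<noteq> v"
    and G2: "G2 face_of P" "G2 \<inter> B = {v}" "u2 \<in> G2" "u2 \<noteq> v"
    and ratio: "(b - a \<bullet> u1) / (d - c \<bullet> u1) \<le> (b - a \<bullet> u2) / (d - c \<bullet> u2)"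
  shows "G1 = G2"
proof -
  have vG1: "v \<in> G1" using G1(2) by blast
  have G1P: "G1 \<subseteq> P" and G2P: "G2 \<subseteq> P" using G1(1) G2(1) face_of_imp_subset by blast+
  have av: "a \<bullet> v = b" and cv: "c \<bullet> v = d" using base(2) vertex(2) G1(2) by blast+
  have c_slack: "c \<bullet> x < d" if "x \<in> P" "x \<noteq> v" for x
  proof -
    have "c \<bullet> x \<le> d" "c \<bullet> x \<noteq> d" using vertex that by blast+
    then show ?thesis by linarith
  qed
  have a_slack: "a \<bullet> x < b" if "x \<in> G1 \<union> G2" "x \<noteq> v" for x
  proof -
    have "x \<in> P" "x \<notin> B" using that G1(2) G2(2) G1P G2P by blast+
    then have "a \<bullet> x \<le> b" "a \<bullet> x \<noteq> b" using base by blast+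
    then show ?thesis by linarith
  qed
  define \<mu> where "\<mu> = (b - a \<bullet> u1) / (d - c \<bullet> u1)"
  have "d - c \<bullet> u1 > 0" "d - c \<bullet> u2 > 0" using c_slack G1 G2 G1P G2P by force+
  moreover have "b - a \<bullet> u1 > 0" using a_slack G1(3,4) by force
  ultimately have "\<mu> > 0" by (simp add: \<mu>_def)
  \<comment> \<open>\<gamma> vanishes at v and u1, is negative on B - {v}, and is nonnegative at u2 because
      \<mu> is the smaller of the two ratios.\<close>
  define \<gamma> where "\<gamma> = \<mu> *\<^sub>R c - a"
  define k where "k = \<mu> * d - b"
  have \<gamma>_eq: "\<gamma> \<bullet> x - k = (b - a \<bullet> x) - \<mu> * (d - c \<bullet> x)" for x
    by (simp add: \<gamma>_def k_def inner_diff_left algebra_simps)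
  have "\<gamma> \<bullet> v = k" "\<gamma> \<bullet> u1 = k"
    using \<gamma>_eq[of v] \<gamma>_eq[of u1] av cv \<open>d - c \<bullet> u1 > 0\<close> by (simp_all add: \<mu>_def)
  then have "affine hull {v, u1} \<subseteq> {x. \<gamma> \<bullet> x = k}"
    by (intro hull_minimal) (auto simp: affine_hyperplane)
  moreover have "aff_dim G1 \<le> 1" using treetope_face_aff_dim_le_1[OF tt G1(1)] G1(2) by blast
  ultimately have on_G1: "\<forall>x\<in>G1. \<gamma> \<bullet> x = k"
    using aff_dim_le_1_subset_affine_hull[OF _ vG1 G1(3,4)] by blast
  have below_on_B: "\<gamma> \<bullet> x < k" if "x \<in> B" "x \<noteq> v" for x
  proof -
    have "x \<in> P" "a \<bullet> x = b" using that(1) base(2) by blast+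
    moreover have "\<mu> * (d - c \<bullet> x) > 0" using c_slack[OF _ that(2)] \<open>x \<in> P\<close> \<open>\<mu> > 0\<close> by simp
    ultimately show ?thesis using \<gamma>_eq[of x] by simp
  qed
  have "\<gamma> \<bullet> u2 \<ge> k"
  proof -
    have "\<mu> \<le> (b - a \<bullet> u2) / (d - c \<bullet> u2)" using ratio by (simp add: \<mu>_def)
    then have "\<mu> * (d - c \<bullet> u2) \<le> b - a \<bullet> u2" using \<open>d - c \<bullet> u2 > 0\<close> by (simp add: le_divide_eq)
    then show ?thesis using \<gamma>_eq[of u2] by simp
  qed
  then show ?thesis using treetope_edges_eq_of_level[OF tt G1 G2 on_G1 below_on_B] by blast
qed

lemma treetope_edge_at_base_vertex_unique:
  fixes P B :: "'a::euclidean_space set"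
  assumes tt: "treetope P B"
    and G1: "G1 face_of P" "G1 \<inter> B = {v}" "G1 \<noteq> {v}"
    and G2: "G2 face_of P" "G2 \<inter> B = {v}" "G2 \<noteq> {v}"
  shows "G1 = G2"
proof -
  have poly: "polyhedron P" and BP: "B face_of P"
    using tt polytope_imp_polyhedron facet_of_imp_face_of by (auto simp: treetope_def)
  obtain a b where base: "P \<subseteq> {x. a \<bullet> x \<le> b}" "B = P \<inter> {x. a \<bullet> x = b}"
    using polyhedron_face_exposed[OF poly BP] .
  have "{v} face_of P" using face_of_Int[OF G1(1) BP] G1(2) by simp
  then obtain c d where vertex: "P \<subseteq> {x. c \<bullet> x \<le> d}" "{v} = P \<inter> {x. c \<bullet> x = d}"
    using polyhedron_face_exposed[OF poly] by blast
  obtain u1 where u1: "u1 \<in> G1" "u1 \<noteq> v" using G1(2,3) by blast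
  obtain u2 where u2: "u2 \<in> G2" "u2 \<noteq> v" using G2(2,3) by blast
  show ?thesis
  proof (cases "(b - a \<bullet> u1) / (d - c \<bullet> u1) \<le> (b - a \<bullet> u2) / (d - c \<bullet> u2)")
    case True
    then show ?thesis
      using treetope_edges_at_vertex_eq_of_ratio_le[OF tt base vertex G1(1,2) u1 G2(1,2) u2]
      by blast
  next
    case False
    then show ?thesis
      using treetope_edges_at_vertex_eq_of_ratio_le[OF tt base vertex G2(1,2) u2 G1(1,2) u1] by simp
  qed
qed

lemma treetope_lift_subset:
  fixes P B F :: "'a::euclidean_space set"
  assumes tt: "treetope P B" and F: "F face_of B" "F \<noteq> {}"
    and G1: "G1 face_of P" "G1 \<noteq> F" "G1 \<inter> B = F"
    and G2: "G2 face_of P" "G2 \<noteq> F" "G2 \<inter> B = F"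
  shows "G1 \<subseteq> G2"
proof (rule ccontr)
  assume "\<not> G1 \<subseteq> G2"
  have polyt: "polytope P" and BP: "B face_of P"
    using tt facet_of_imp_face_of by (auto simp: treetope_def)
  have poly: "polyhedron P" using polyt polytope_imp_polyhedron by blast
  have FP: "F face_of P" using face_of_trans[OF F(1) BP] .
  then have "polytope F" using face_of_polytope_polytope[OF polyt] by blast
  then obtain v where "v extreme_point_of F"
    using extreme_point_exists_convex polytope_imp_compact polytope_imp_convex F(2) by blast
  then have "{v} face_of F" by (simp add: face_of_singleton)
  then have vP: "{v} face_of P" and vF: "v \<in> F"
    using face_of_trans[OF _ FP] face_of_imp_subset by blast+
  have vB: "v \<in> B" using vF G1(3) by blast
  have G1P: "G1 \<subseteq> P" and G2P: "G2 \<subseteq> P" using G1(1) G2(1) face_of_imp_subset by blast+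
  have "(G1 \<inter> G2) face_of G1" using face_of_subset[OF face_of_Int[OF G1(1) G2(1)] _ G1P] by blast
  moreover have "v \<in> G1 \<inter> G2" "G1 \<inter> G2 \<noteq> G1" using vF G1(3) G2(3) \<open>\<not> G1 \<subseteq> G2\<close> by blast+
  ultimately obtain E where E: "E face_of G1" "v \<in> E" "aff_dim E = 1" "\<not> E \<subseteq> G1 \<inter> G2"
    using polyhedron_edge_leaving_face[OF face_of_polyhedron_polyhedron[OF poly G1(1)]
        face_of_subset[OF vP _ G1P]] by blast
  have EP: "E face_of P" using face_of_trans[OF E(1) G1(1)] .
  have "E \<subseteq> G1" using E(1) face_of_imp_subset by blast
  then have "\<not> E \<subseteq> B" using E(4) G1(3) G2(3) by blast
  then have EB: "E \<inter> B = {v}" using face_Int_face_eq_of_aff_dim[OF EP BP vP] E(2,3) vB by simp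
  have "F face_of G2" using face_of_subset[OF FP _ G2P] G2(3) by blast
  then obtain E' where E': "E' face_of G2" "v \<in> E'" "aff_dim E' = 1" "\<not> E' \<subseteq> F"
    using polyhedron_edge_leaving_face[OF face_of_polyhedron_polyhedron[OF poly G2(1)]
        face_of_subset[OF vP _ G2P]] vF G2(2,3) by blast
  have E'P: "E' face_of P" using face_of_trans[OF E'(1) G2(1)] .
  have "E' \<subseteq> G2" using E'(1) face_of_imp_subset by blast
  then have "\<not> E' \<subseteq> B" using E'(4) G2(3) by blast
  then have E'B: "E' \<inter> B = {v}" using face_Int_face_eq_of_aff_dim[OF E'P BP vP] E'(2,3) vB by simp
  have "E = E'" using treetope_edge_at_base_vertex_unique[OF tt EP EB _ E'P E'B] E(3) E'(3) by force
  then show False using \<open>E \<subseteq> G1\<close> \<open>E' \<subseteq> G2\<close> E(4) by blast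
qed

lemma polyhedron_face_lift_exists:
  fixes P B F :: "'a::euclidean_space set"
  assumes poly: "polyhedron P" and BP: "B face_of P" "B \<noteq> P" and F: "F face_of B" "F \<noteq> {}"
  obtains E where "E face_of P" "E \<noteq> F" "E \<inter> B = F"
proof -
  obtain a b where base: "P \<subseteq> {x. a \<bullet> x \<le> b}" "B = P \<inter> {x. a \<bullet> x = b}"
    using polyhedron_face_exposed[OF poly BP(1)] .
  have FP: "F face_of P" using face_of_trans[OF F(1) BP(1)] .
  have FB: "F \<subseteq> B" using F(1) face_of_imp_subset by blast
  obtain y where "y \<in> P" "y \<notin> B" using BP face_of_imp_subset by blast
  then have "(- a) \<bullet> y > - b" using base by fastforce
  moreover have "(- a) \<bullet> x = - b" if "x \<in> F" for x using FB base(2) that by auto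
  ultimately obtain E z where E: "E face_of P" "F \<subseteq> E" "aff_dim E = aff_dim F + 1"
      and z: "z \<in> E" "(- a) \<bullet> z > - b"
    using polyhedron_cover_above_level[OF poly FP F(2) _ \<open>y \<in> P\<close>] by blast
  have "z \<notin> B" using z(2) base(2) by auto
  then have "E \<inter> B = F" "E \<noteq> F"
    using face_Int_face_eq_of_aff_dim[OF E(1) BP(1) FP E(2) FB _ E(3)] z(1) FB by auto
  then show ?thesis using that E(1) by blast
qed

theorem mainTheorem4:
  fixes P B F :: "'a::euclidean_space set"
  assumes "treetope P B"
    and "F face_of B"
    and "F \<noteq> {}"
  shows "\<exists>!F'. F' face_of P \<and> F' \<noteq> F \<and> F' \<inter> B = F"
proof -
  have "polyhedron P" "B face_of P" "B \<noteq> P"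
    using assms(1) polytope_imp_polyhedron facet_of_imp_face_of by (auto simp: treetope_def)
  then obtain E where E: "E face_of P" "E \<noteq> F" "E \<inter> B = F"
    using polyhedron_face_lift_exists[OF _ _ _ assms(2,3)] by blast
  show ?thesis
  proof (rule ex1I[of _ E])
    fix G assume "G face_of P \<and> G \<noteq> F \<and> G \<inter> B = F"
    then have G: "G face_of P" "G \<noteq> F" "G \<inter> B = F" by blast+
    show "G = E"
      using treetope_lift_subset[OF assms G E] treetope_lift_subset[OF assms E G] by blast
  qed (use E in blast)
qed

end
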